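(* Suppose $E_3\subset S=\mathrm{span}_{\mathbb{C}}\{I_1,\dots,I_m\}$, i.e. $a_k=b_k=0$ for all $k=m+1,\dots,n$. Then for every circle $C$ as described in the context, $\lambda:=\int_C\zeta^{-1}\,d\zeta=2\pi i$ (that is, $2\pi i$ times the unit of $\mathbb{A}_n^m$).
   Context: Fix natural numbers $m\le n$. $\mathbb{A}_n^m$ is a commutative associative algebra with unit over $\mathbb{C}$ with a basis $\{I_k\}_{k=1}^n$ satisfying: (1) for $r,s\in\{1,\dots,m\}$, $I_rI_s=0$ if $r\ne s$ and $I_rI_r=I_r$; (2) for $r,s\in\{m+1,\dots,n\}$, $I_rI_s=\sum_{k=\max\{r,s\}+1}^{n}\Upsilon^{s}_{r,k}I_k$ with constants $\Upsilon^s_{r,k}\in\mathbb{C}$; (3) for each $s\in\{m+1,\dots,n\}$ there is a unique $u_s\in\{1,\dots,m\}$ such that for $r\in\{1,\dots,m\}$, $I_rI_s=I_s$ if $r=u_s$ and $0$ otherwise. Unit $1=\sum_{u=1}^mI_u$; $\mathbb{A}_n^m=S\oplus_sN$ with $S=\mathrm{span}\{I_1,\dots,I_m\}$, $N=\mathrm{span}\{I_{m+1},\dots,I_n\}$. $f_u(\sum_k\lambda_kI_k)=\lambda_u$. Let $e_1=1$, $e_2=\sum_ka_kI_k$, $e_3=\sum_kb_kI_k$ ($a_k,b_k\in\mathbb{C}$) be linearly independent over $\mathbb{R}$; $\zeta=xe_1+ye_2+ze_3$ ($x,y,z\in\mathbb{R}$), $E_3$ their real span. Standing assumption: $f_u(E_3)=\mathbb{C}$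 for all $u=1,\dots,m$. $\zeta$ is non-invertible exactly when $(x,y,z)$ lies on one of the lines $L_u=\{x+y\,\mathrm{Re}\,a_u+z\,\mathrm{Re}\,b_u=0,\ y\,\mathrm{Im}\,a_u+z\,\mathrm{Im}\,b_u=0\}$. The circle: $C\subset E_3$ is $C=\{xe_1+ye_2+ze_3:(x,y,z)\in C'\}$ for a Euclidean circle $C'\subset\mathbb{R}^3$ of radius $R>0$ centered at the origin, such that for every $u$ the image $f_u(C)$ is a positively oriented closed Jordan curve in $\mathbb{C}$ bounding a domain containing $0$. Integral: for a Jordan rectifiable curve $\gamma$ and continuous $\Psi=\sum_k(U_k+iV_k)I_k$ on $\gamma_\zeta$, $\int_{\gamma_\zeta}\Psi d\zeta:=\sum_kI_k\int_\gamma(U_k+iV_k)dx+\sum_ke_2I_k\int_\gamma(U_k+iV_k)dy+\sum_ke_3I_k\int_\gamma(U_k+iV_k)dz$. *)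

theory Defs
  imports "HOL-Complex_Analysis.Complex_Analysis"
begin

text \<open>Elements of the algebra A_n^m are represented by their coordinate functions
  with respect to the basis I_1, ..., I_n: an element sum_k lambda_k I_k is the function
  k |-> lambda_k, vanishing outside {1..n}.\<close>

type_synonym alg = "nat \<Rightarrow> complex"

definition alg_elem :: "nat \<Rightarrow> alg \<Rightarrow> bool" where
  "alg_elem n a \<longleftrightarrow> (\<forall>k. k \<notin> {1..n} \<longrightarrow> a k = 0)"

definition Ib :: "nat \<Rightarrow> alg" where
  "Ib k = (\<lambda>j. if j = k then 1 else 0)"

text \<open>Coefficient of I_k in the product I_r I_s, following rules (1)-(3);
  Ups r s k stands for Upsilon^s_{r,k}, us s for u_s.\<close>
definition bmul :: "nat \<Rightarrow> nat \<Rightarrow> (nat \<Rightarrow> nat \<Rightarrow> nat \<Rightarrow> complex) \<Rightarrow> (nat \<Rightarrow> nat)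
    \<Rightarrow> nat \<Rightarrow> nat \<Rightarrow> nat \<Rightarrow> complex" where
  "bmul n m Ups us r s k =
     (if r \<le> m \<and> s \<le> m then (if r = s \<and> k = r then 1 else 0)
      else if m < r \<and> m < s then (if max r s < k \<and> k \<le> n then Ups r s k else 0)
      else if r \<le> m then (if r = us s \<and> k = s then 1 else 0)
      else (if s = us r \<and> k = r then 1 else 0))"

definition amul :: "nat \<Rightarrow> nat \<Rightarrow> (nat \<Rightarrow> nat \<Rightarrow> nat \<Rightarrow> complex) \<Rightarrow> (nat \<Rightarrow> nat)
    \<Rightarrow> alg \<Rightarrow> alg \<Rightarrow> alg" where
  "amul n m Ups us a b = (\<lambda>k. \<Sum>r\<in>{1..n}. \<Sum>s\<in>{1..n}. a r * b s * bmul n m Ups us r s k)"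

definition aone :: "nat \<Rightarrow> alg" where
  "aone m = (\<lambda>k. if 1 \<le> k \<and> k \<le> m then 1 else 0)"

definition ainv :: "nat \<Rightarrow> nat \<Rightarrow> (nat \<Rightarrow> nat \<Rightarrow> nat \<Rightarrow> complex) \<Rightarrow> (nat \<Rightarrow> nat)
    \<Rightarrow> alg \<Rightarrow> alg" where
  "ainv n m Ups us w = (THE v. alg_elem n v \<and> amul n m Ups us w v = aone m)"

text \<open>zeta = x e_1 + y e_2 + z e_3 with e_1 = 1, e_2 = sum a_k I_k, e_3 = sum b_k I_k.\<close>
definition zeta :: "nat \<Rightarrow> alg \<Rightarrow> alg \<Rightarrow> real \<Rightarrow> real \<Rightarrow> real \<Rightarrow> alg" where
  "zeta m a b x y z = (\<lambda>k. of_real x * aone m k + of_real y * a k + of_real z * b k)"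

definition circ :: "real \<Rightarrow> real^3 \<Rightarrow> real^3 \<Rightarrow> real \<Rightarrow> real^3" where
  "circ R p q t = R *\<^sub>R (cos t *\<^sub>R p + sin t *\<^sub>R q)"

text \<open>The integral int_{gamma_zeta} Psi d zeta along a C^1 parametrised curve
  gamma : [lo, hi] -> R^3, where Psi t is the value of Psi at the point zeta(gamma t):
  sum_k I_k int Psi_k dx + sum_k e_2 I_k int Psi_k dy + sum_k e_3 I_k int Psi_k dz.\<close>
definition curve_int :: "nat \<Rightarrow> nat \<Rightarrow> (nat \<Rightarrow> nat \<Rightarrow> nat \<Rightarrow> complex) \<Rightarrow> (nat \<Rightarrow> nat)
    \<Rightarrow> alg \<Rightarrow> alg \<Rightarrow> (real \<Rightarrow> alg) \<Rightarrow> (real \<Rightarrow> real^3) \<Rightarrow> real \<Rightarrow> real \<Rightarrow> alg" where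
  "curve_int n m Ups us e2 e3 Psi \<gamma> lo hi =
     (let J = (\<lambda>i k. integral {lo..hi} (\<lambda>t. Psi t k * of_real (deriv (\<lambda>s. \<gamma> s $ i) t)))
      in (\<lambda>j. \<Sum>k\<in>{1..n}. J 1 k * Ib k j + J 2 k * amul n m Ups us e2 (Ib k) j
                           + J 3 k * amul n m Ups us e3 (Ib k) j))"

definition pos_jordan_around0 :: "(real \<Rightarrow> complex) \<Rightarrow> bool" where
  "pos_jordan_around0 g \<longleftrightarrow> simple_path g \<and> pathfinish g = pathstart g
     \<and> 0 \<in> inside (path_image g) \<and> (\<forall>w\<in>inside (path_image g). winding_number g w = 1)"

end

theory Submission
  imports Defs
begin

text \<open>Since \<open>a\<close> and \<open>b\<close> lie in the semisimple part \<open>S\<close>, so do \<open>\<zeta>\<close> and, on the circle,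
  \<open>\<zeta>\<^sup>-\<^sup>1 = \<Sum>\<^sub>u I\<^sub>u / f\<^sub>u(\<zeta>)\<close>; multiplication by elements of \<open>S\<close> acts coordinatewise on
  \<open>I\<^sub>1, \<dots>, I\<^sub>m\<close>. Hence the \<open>u\<close>-th coordinate of the integral is the complex contour
  integral of \<open>1/w\<close> along the Jordan curve \<open>f\<^sub>u(C)\<close>, which is \<open>2\<pi>i\<close> because \<open>f\<^sub>u(C)\<close> winds once
  around \<open>0\<close>, while all coordinates outside \<open>S\<close> vanish.\<close>

definition semisimple_elem :: "nat \<Rightarrow> alg \<Rightarrow> bool" where
  "semisimple_elem m w \<longleftrightarrow> (\<forall>k. k \<notin> {1..m} \<longrightarrow> w k = 0)"

lemma bmul_semisimple_left:
  assumes "r \<le> m"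
  shows "bmul n m Ups us r s k =
    (if s = k then (if k \<le> m then (if r = k then 1 else 0) else (if r = us k then 1 else 0)) else 0)"
  using assms unfolding bmul_def by auto

lemma amul_semisimple_left:
  assumes w: "semisimple_elem m w" and mn: "m \<le> n"
  shows "amul n m Ups us w v k =
    (if k \<in> {1..m} then w k * v k else if k \<in> {m+1..n} then w (us k) * v k else 0)"
    (is "_ = ?rhs")
proof -
  have "amul n m Ups us w v k = (\<Sum>r\<in>{1..n}. \<Sum>s\<in>{1..n}. w r * (v s *
      (if s = k then (if k \<le> m then (if r = k then 1 else 0) else (if r = us k then 1 else 0)) else 0)))"
    unfolding amul_def
  proof (intro sum.cong refl)
    fix r s
    show "w r * v s * bmul n m Ups us r s k = w r * (v s *
      (if s = k then (if k \<le> m then (if r = k then 1 else 0) else (if r = us k then 1 else 0)) else 0))"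
      using w bmul_semisimple_left[of r m n Ups us s k]
      by (cases "r \<le> m") (auto simp: semisimple_elem_def)
  qed
  also have "\<dots> = (\<Sum>r\<in>{1..n}. w r * (if k \<in> {1..n} then v k *
      (if k \<le> m then (if r = k then 1 else 0) else (if r = us k then 1 else 0)) else 0))"
    by (intro sum.cong refl)
      (auto simp: sum_distrib_left[symmetric] if_distrib sum.delta' cong: if_cong)
  also have "\<dots> = ?rhs"
    using mn w by (auto simp: semisimple_elem_def sum.delta if_distrib[of "\<lambda>x. _ * x"] cong: if_cong)
  finally show ?thesis .
qed

lemma ainv_semisimple:
  assumes w: "semisimple_elem m w" and mn: "m \<le> n"
    and nz: "\<forall>k\<in>{1..m}. w k \<noteq> 0"
    and us: "\<forall>s\<in>{m+1..n}. us s \<in> {1..m}"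
  shows "ainv n m Ups us w = (\<lambda>k. if k \<in> {1..m} then 1 / w k else 0)"
  unfolding ainv_def
proof (rule the_equality)
  show "alg_elem n (\<lambda>k. if k \<in> {1..m} then 1 / w k else 0) \<and>
      amul n m Ups us w (\<lambda>k. if k \<in> {1..m} then 1 / w k else 0) = aone m"
    using mn nz by (auto simp: alg_elem_def aone_def amul_semisimple_left[OF w mn] fun_eq_iff)
next
  fix v assume v: "alg_elem n v \<and> amul n m Ups us w v = aone m"
  show "v = (\<lambda>k. if k \<in> {1..m} then 1 / w k else 0)"
  proof
    fix k
    have vk: "amul n m Ups us w v k = aone m k"
      using v by simp
    consider "k \<in> {1..m}" | "k \<in> {m+1..n}" | "k \<notin> {1..n}"
      by fastforce
    then show "v k = (if k \<in> {1..m} then 1 / w k else 0)"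
    proof cases
      case 1
      with vk nz show ?thesis
        by (auto simp: amul_semisimple_left[OF w mn] aone_def field_simps)
    next
      case 2
      \<comment> \<open>\<open>w (us k) * v k = 0\<close> forces \<open>v k = 0\<close>, since \<open>us k \<in> {1..m}\<close>\<close>
      with vk nz us show ?thesis
        by (auto simp: amul_semisimple_left[OF w mn] aone_def)
    next
      case 3
      with v mn show ?thesis
        by (auto simp: alg_elem_def)
    qed
  qed
qed

lemma curve_int_cong:
  assumes "\<And>t. t \<in> {lo..hi} \<Longrightarrow> Psi t = Psi' t"
  shows "curve_int n m Ups us e2 e3 Psi \<gamma> lo hi = curve_int n m Ups us e2 e3 Psi' \<gamma> lo hi"
proof -
  have "integral {lo..hi} (\<lambda>t. Psi t k * X t) = integral {lo..hi} (\<lambda>t. Psi' t k * X t)" for k X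
    using assms by (intro integral_cong) auto
  then show ?thesis
    unfolding curve_int_def Let_def by simp
qed

lemma curve_int_semisimple:
  assumes e2: "semisimple_elem m e2" and e3: "semisimple_elem m e3"
    and Psi: "\<And>t. semisimple_elem m (Psi t)" and mn: "m \<le> n"
  shows "curve_int n m Ups us e2 e3 Psi \<gamma> lo hi = (\<lambda>j. if j \<in> {1..m} then
      integral {lo..hi} (\<lambda>t. Psi t j * of_real (deriv (\<lambda>s. \<gamma> s $ 1) t))
      + integral {lo..hi} (\<lambda>t. Psi t j * of_real (deriv (\<lambda>s. \<gamma> s $ 2) t)) * e2 j
      + integral {lo..hi} (\<lambda>t. Psi t j * of_real (deriv (\<lambda>s. \<gamma> s $ 3) t)) * e3 j
    else 0)"
proof
  fix j
  define J where "J i k = integral {lo..hi} (\<lambda>t. Psi t k * of_real (deriv (\<lambda>s. \<gamma> s $ i) t))" for i k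
  have J0: "J i k = 0" if "k \<notin> {1..m}" for i k
    using Psi that by (simp add: J_def semisimple_elem_def)
  have "J 1 k * Ib k j + J 2 k * amul n m Ups us e2 (Ib k) j + J 3 k * amul n m Ups us e3 (Ib k) j
      = (if k = j \<and> j \<in> {1..m} then J 1 j + J 2 j * e2 j + J 3 j * e3 j else 0)" for k
    using J0 by (auto simp: amul_semisimple_left[OF e2 mn] amul_semisimple_left[OF e3 mn] Ib_def)
  then have "curve_int n m Ups us e2 e3 Psi \<gamma> lo hi j
      = (\<Sum>k\<in>{1..n}. if k = j \<and> j \<in> {1..m} then J 1 j + J 2 j * e2 j + J 3 j * e3 j else 0)"
    unfolding curve_int_def Let_def J_def[symmetric] by simp
  also have "\<dots> = (if j \<in> {1..m} then J 1 j + J 2 j * e2 j + J 3 j * e3 j else 0)"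
    using mn by (auto simp: sum.delta')
  finally show "curve_int n m Ups us e2 e3 Psi \<gamma> lo hi j = (if j \<in> {1..m} then
      integral {lo..hi} (\<lambda>t. Psi t j * of_real (deriv (\<lambda>s. \<gamma> s $ 1) t))
      + integral {lo..hi} (\<lambda>t. Psi t j * of_real (deriv (\<lambda>s. \<gamma> s $ 2) t)) * e2 j
      + integral {lo..hi} (\<lambda>t. Psi t j * of_real (deriv (\<lambda>s. \<gamma> s $ 3) t)) * e3 j
    else 0)"
    by (simp add: J_def)
qed

lemma jordan_loop_log_derivative_integral:
  fixes Z Z' :: "real \<Rightarrow> complex"
  assumes Z': "\<And>t. (Z has_vector_derivative Z' t) (at t)" and cont: "continuous_on UNIV Z'"
    and L: "L > 0" and jordan: "pos_jordan_around0 (\<lambda>s. Z (L * s))"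
  shows "\<forall>t\<in>{0..L}. Z t \<noteq> 0" and "((\<lambda>t. Z' t / Z t) has_integral 2 * pi * \<i>) {0..L}"
proof -
  define g where "g = (\<lambda>s. Z (L * s))"
  have g': "(g has_vector_derivative L *\<^sub>R Z' (L * s)) (at s)" for s
    using vector_diff_chain_at[OF _ Z', of "\<lambda>s. L * s" L s]
    by (auto intro!: derivative_eq_intros simp: g_def o_def
        has_real_derivative_iff_has_vector_derivative[symmetric])
  have "g C1_differentiable_on {0..1}"
    unfolding C1_differentiable_on_def
    using g' by (auto intro!: exI[of _ "\<lambda>s. L *\<^sub>R Z' (L * s)"] continuous_intros
        continuous_on_compose2[OF cont])
  then have "valid_path g"
    by (simp add: valid_path_def C1_differentiable_imp_piecewise)
  moreover have inside0: "0 \<in> inside (path_image g)" and "winding_number g 0 = 1"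
    using jordan by (auto simp: pos_jordan_around0_def g_def)
  moreover have g0: "0 \<notin> path_image g"
    using inside0 inside_no_overlap by blast
  ultimately have "((\<lambda>s. 1 / g s * vector_derivative g (at s within {0..1})) has_integral 2 * pi * \<i>) {0..1}"
    using has_contour_integral_winding_number[of g 0] by (simp add: has_contour_integral_def)
  then have "((\<lambda>s. L *\<^sub>R (Z' (L * s) / Z (L * s))) has_integral 2 * pi * \<i>) {0..1}"
  proof (rule has_integral_eq[rotated])
    fix s :: real assume "s \<in> {0..1}"
    then have "vector_derivative g (at s within {0..1}) = L *\<^sub>R Z' (L * s)"
      using g' by (intro vector_derivative_within_closed_interval) (auto intro: has_vector_derivative_at_within)
    then show "1 / g s * vector_derivative g (at s within {0..1}) = L *\<^sub>R (Z' (L * s) / Z (L * s))"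
      by (simp add: g_def scaleR_conv_of_real)
  qed
  then have "((\<lambda>s. Z' (L * s) / Z (L * s)) has_integral (1 / L) *\<^sub>R (2 * pi * \<i>)) ((\<lambda>x. x / L) ` {0..L})"
    using L has_integral_cmul[where c = "1 / L"] by force
  then show "((\<lambda>t. Z' t / Z t) has_integral 2 * pi * \<i>) {0..L}"
    using L has_integral_stretch_real_iff[of L "\<lambda>t. Z' t / Z t" "(1 / L) *\<^sub>R (2 * pi * \<i>)" 0 L]
    by simp
  show "\<forall>t\<in>{0..L}. Z t \<noteq> 0"
  proof
    fix t assume "t \<in> {0..L}"
    then have "g (t / L) \<in> path_image g"
      using L by (auto simp: path_image_def)
    then show "Z t \<noteq> 0"
      using g0 L by (auto simp: g_def)
  qed
qed

text \<open>\<open>coord_curve \<gamma> (a u) (b u)\<close> is the curve \<open>f\<^sub>u(\<zeta>(\<gamma>))\<close> in \<open>\<complex>\<close>.\<close>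

definition coord_curve :: "(real \<Rightarrow> real^3) \<Rightarrow> complex \<Rightarrow> complex \<Rightarrow> real \<Rightarrow> complex" where
  "coord_curve \<gamma> \<alpha> \<beta> t = of_real (\<gamma> t $ 1) + of_real (\<gamma> t $ 2) * \<alpha> + of_real (\<gamma> t $ 3) * \<beta>"

lemma coord_curve_log_derivative_integral:
  fixes \<gamma> \<gamma>' :: "real \<Rightarrow> real^3"
  assumes \<gamma>': "\<And>i t. ((\<lambda>s. \<gamma> s $ i) has_real_derivative \<gamma>' t $ i) (at t)"
    and cont: "continuous_on UNIV \<gamma>'" and L: "L > 0"
    and jordan: "pos_jordan_around0 (\<lambda>s. coord_curve \<gamma> \<alpha> \<beta> (L * s))"
  shows "\<forall>t\<in>{0..L}. coord_curve \<gamma> \<alpha> \<beta> t \<noteq> 0"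
    and "integral {0..L} (\<lambda>t. 1 / coord_curve \<gamma> \<alpha> \<beta> t * of_real (\<gamma>' t $ 1))
       + integral {0..L} (\<lambda>t. 1 / coord_curve \<gamma> \<alpha> \<beta> t * of_real (\<gamma>' t $ 2)) * \<alpha>
       + integral {0..L} (\<lambda>t. 1 / coord_curve \<gamma> \<alpha> \<beta> t * of_real (\<gamma>' t $ 3)) * \<beta> = 2 * pi * \<i>"
proof -
  define Z where "Z = coord_curve \<gamma> \<alpha> \<beta>"
  define Z' where "Z' t = of_real (\<gamma>' t $ 1) + of_real (\<gamma>' t $ 2) * \<alpha> + of_real (\<gamma>' t $ 3) * \<beta>" for t
  have "(Z has_vector_derivative Z' t) (at t)" for t
    unfolding Z_def Z'_def coord_curve_def [abs_def]
    by (intro derivative_intros has_vector_derivative_of_real \<gamma>')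
  moreover have "continuous_on UNIV Z'"
    unfolding Z'_def by (intro continuous_intros cont)
  ultimately have Z0: "\<forall>t\<in>{0..L}. Z t \<noteq> 0" and "((\<lambda>t. Z' t / Z t) has_integral 2 * pi * \<i>) {0..L}"
    using jordan_loop_log_derivative_integral[OF _ _ L] jordan unfolding Z_def by blast+
  then show "\<forall>t\<in>{0..L}. coord_curve \<gamma> \<alpha> \<beta> t \<noteq> 0"
    by (simp add: Z_def)
  have "continuous_on UNIV (\<lambda>t. \<chi> i. \<gamma> t $ i)"
    using \<gamma>' by (intro continuous_on_vec_lambda continuous_at_imp_continuous_on ballI DERIV_isCont)
  then have "continuous_on {0..L} Z"
    unfolding Z_def coord_curve_def [abs_def]
    by (intro continuous_intros) (auto intro: continuous_on_subset)
  then have "(\<lambda>t. 1 / Z t * of_real (\<gamma>' t $ i)) integrable_on {0..L}" for i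
    using Z0 cont by (intro integrable_continuous_interval continuous_intros)
      (auto intro: continuous_on_subset)
  then have "((\<lambda>t. 1 / Z t * of_real (\<gamma>' t $ 1) + 1 / Z t * of_real (\<gamma>' t $ 2) * \<alpha>
      + 1 / Z t * of_real (\<gamma>' t $ 3) * \<beta>) has_integral
      integral {0..L} (\<lambda>t. 1 / Z t * of_real (\<gamma>' t $ 1))
      + integral {0..L} (\<lambda>t. 1 / Z t * of_real (\<gamma>' t $ 2)) * \<alpha>
      + integral {0..L} (\<lambda>t. 1 / Z t * of_real (\<gamma>' t $ 3)) * \<beta>) {0..L}"
    by (intro has_integral_add has_integral_mult_left integrable_integral)
  moreover have "1 / Z t * of_real (\<gamma>' t $ 1) + 1 / Z t * of_real (\<gamma>' t $ 2) * \<alpha>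
      + 1 / Z t * of_real (\<gamma>' t $ 3) * \<beta> = Z' t / Z t" for t
    by (simp add: Z'_def divide_inverse ring_distribs mult_ac)
  ultimately have "((\<lambda>t. Z' t / Z t) has_integral
      integral {0..L} (\<lambda>t. 1 / Z t * of_real (\<gamma>' t $ 1))
      + integral {0..L} (\<lambda>t. 1 / Z t * of_real (\<gamma>' t $ 2)) * \<alpha>
      + integral {0..L} (\<lambda>t. 1 / Z t * of_real (\<gamma>' t $ 3)) * \<beta>) {0..L}"
    by simp
  from has_integral_unique[OF this \<open>((\<lambda>t. Z' t / Z t) has_integral 2 * pi * \<i>) {0..L}\<close>]
  show "integral {0..L} (\<lambda>t. 1 / coord_curve \<gamma> \<alpha> \<beta> t * of_real (\<gamma>' t $ 1))
       + integral {0..L} (\<lambda>t. 1 / coord_curve \<gamma> \<alpha> \<beta> t * of_real (\<gamma>' t $ 2)) * \<alpha>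
       + integral {0..L} (\<lambda>t. 1 / coord_curve \<gamma> \<alpha> \<beta> t * of_real (\<gamma>' t $ 3)) * \<beta> = 2 * pi * \<i>"
    by (simp only: Z_def)
qed

lemma circ_component_has_derivative:
  "((\<lambda>s. circ R p q s $ i) has_real_derivative circ R q (- p) t $ i) (at t)"
  unfolding circ_def by (auto intro!: derivative_eq_intros simp: algebra_simps)

lemma circ_coord_curve_log_derivative_integral:
  assumes "pos_jordan_around0 (\<lambda>s. coord_curve (circ R p q) \<alpha> \<beta> (2 * pi * s))"
  shows "\<forall>t\<in>{0..2 * pi}. coord_curve (circ R p q) \<alpha> \<beta> t \<noteq> 0"
    and "integral {0..2 * pi} (\<lambda>t. 1 / coord_curve (circ R p q) \<alpha> \<beta> t * of_real (circ R q (- p) t $ 1))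
       + integral {0..2 * pi} (\<lambda>t. 1 / coord_curve (circ R p q) \<alpha> \<beta> t * of_real (circ R q (- p) t $ 2)) * \<alpha>
       + integral {0..2 * pi} (\<lambda>t. 1 / coord_curve (circ R p q) \<alpha> \<beta> t * of_real (circ R q (- p) t $ 3)) * \<beta>
       = 2 * pi * \<i>"
proof -
  have "continuous_on UNIV (circ R q (- p))"
    unfolding circ_def [abs_def] by (intro continuous_intros)
  from coord_curve_log_derivative_integral[OF circ_component_has_derivative this _ assms]
  show "\<forall>t\<in>{0..2 * pi}. coord_curve (circ R p q) \<alpha> \<beta> t \<noteq> 0"
    and "integral {0..2 * pi} (\<lambda>t. 1 / coord_curve (circ R p q) \<alpha> \<beta> t * of_real (circ R q (- p) t $ 1))
       + integral {0..2 * pi} (\<lambda>t. 1 / coord_curve (circ R p q) \<alpha> \<beta> t * of_real (circ R q (- p) t $ 2)) * \<alpha>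
       + integral {0..2 * pi} (\<lambda>t. 1 / coord_curve (circ R p q) \<alpha> \<beta> t * of_real (circ R q (- p) t $ 3)) * \<beta>
       = 2 * pi * \<i>"
    by simp_all
qed

theorem theorem9:
  fixes n m :: nat and Ups :: "nat \<Rightarrow> nat \<Rightarrow> nat \<Rightarrow> complex" and us :: "nat \<Rightarrow> nat"
    and a b :: "nat \<Rightarrow> complex" and R :: real and p q :: "real^3"
  assumes mn: "1 \<le> m" "m \<le> n"
    and us: "\<forall>s\<in>{m+1..n}. us s \<in> {1..m}"
    and comm: "\<forall>x y. alg_elem n x \<and> alg_elem n y \<longrightarrow> amul n m Ups us x y = amul n m Ups us y x"
    and assoc: "\<forall>x y z. alg_elem n x \<and> alg_elem n y \<and> alg_elem n z \<longrightarrow>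
        amul n m Ups us (amul n m Ups us x y) z = amul n m Ups us x (amul n m Ups us y z)"
    and ae: "alg_elem n a" and be: "alg_elem n b"
    and indep: "\<forall>x y z. zeta m a b x y z = (\<lambda>k. 0) \<longrightarrow> x = 0 \<and> y = 0 \<and> z = 0"
    and surj: "\<forall>u\<in>{1..m}. {of_real x + of_real y * a u + of_real z * b u | x y z. True} = UNIV"
    and inS: "\<forall>k\<in>{m+1..n}. a k = 0 \<and> b k = 0"
    and R: "R > 0"
    and pq: "p \<bullet> p = 1" "q \<bullet> q = 1" "p \<bullet> q = 0"
    and orient: "\<forall>u\<in>{1..m}. pos_jordan_around0
        (\<lambda>s. let c = circ R p q (2 * pi * s)
             in of_real (c $ 1) + of_real (c $ 2) * a u + of_real (c $ 3) * b u)"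
  shows "curve_int n m Ups us a b
           (\<lambda>t. let c = circ R p q t in ainv n m Ups us (zeta m a b (c $ 1) (c $ 2) (c $ 3)))
           (circ R p q) 0 (2 * pi)
         = (\<lambda>k. 2 * pi * \<i> * aone m k)"
proof -
  have a: "semisimple_elem m a" and b: "semisimple_elem m b"
    using ae be inS by (auto simp: semisimple_elem_def alg_elem_def not_le)
  define Z where "Z u = coord_curve (circ R p q) (a u) (b u)" for u
  have Z: "(\<forall>t\<in>{0..2 * pi}. Z u t \<noteq> 0) \<and>
      integral {0..2 * pi} (\<lambda>t. 1 / Z u t * of_real (circ R q (- p) t $ 1))
      + integral {0..2 * pi} (\<lambda>t. 1 / Z u t * of_real (circ R q (- p) t $ 2)) * a u
      + integral {0..2 * pi} (\<lambda>t. 1 / Z u t * of_real (circ R q (- p) t $ 3)) * b u = 2 * pi * \<i>"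
    if "u \<in> {1..m}" for u
    using circ_coord_curve_log_derivative_integral[of R p q "a u" "b u"] orient that
    by (simp add: Z_def coord_curve_def Let_def)
  define Psi where "Psi t = (\<lambda>k. if k \<in> {1..m} then 1 / Z k t else 0)" for t
  have "ainv n m Ups us (zeta m a b (circ R p q t $ 1) (circ R p q t $ 2) (circ R p q t $ 3)) = Psi t"
    if "t \<in> {0..2 * pi}" for t
  proof -
    have "zeta m a b (circ R p q t $ 1) (circ R p q t $ 2) (circ R p q t $ 3)
        = (\<lambda>k. if k \<in> {1..m} then Z k t else 0)"
      using a b by (auto simp: zeta_def aone_def Z_def coord_curve_def semisimple_elem_def)
    then show ?thesis
      using Z that
      by (auto simp: ainv_semisimple[OF _ mn(2) _ us] Psi_def semisimple_elem_def)
  qed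
  then have "curve_int n m Ups us a b
      (\<lambda>t. let c = circ R p q t in ainv n m Ups us (zeta m a b (c $ 1) (c $ 2) (c $ 3)))
      (circ R p q) 0 (2 * pi) = curve_int n m Ups us a b Psi (circ R p q) 0 (2 * pi)"
    by (intro curve_int_cong) (simp add: Let_def)
  also have "\<dots> = (\<lambda>k. 2 * pi * \<i> * aone m k)"
    using Z mn by (simp add: curve_int_semisimple[OF a b _ mn(2)] semisimple_elem_def Psi_def
        DERIV_imp_deriv[OF circ_component_has_derivative] aone_def fun_eq_iff)
  finally show ?thesis .
qed

end
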